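(* Let $r$ be a positive real number such that $1, r, r^2, r^3$ are linearly independent over $\mathbb{Q}$, and let $\Lambda \subset \mathbb{C}^2$ be the lattice generated by the column vectors of the period matrix $$P = \begin{pmatrix} 1 & 0 & \sqrt{-1}\,r^3 & r \\ 0 & 1 & r & \sqrt{-1} \end{pmatrix}.$$ Then the $2$-dimensional complex torus $\mathbb{A} = \mathbb{C}^2/\Lambda$ is a simple abelian variety.
   Context: An abelian variety is a complex torus admitting a positive line bundle (equivalently a polarization). An abelian variety is simple if it contains no complex subtorus other than $0$ and itself; for a $2$-dimensional torus this means it contains no $1$-dimensional complex subtorus. *)

theory Defs
  imports "HOL-Analysis.Analysis"
begin

definition cscale :: "complex \<Rightarrow> complex \<times> complex \<Rightarrow> complex \<times> complex" where
  "cscale c z = (c * fst z, c * snd z)"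

definition period_col :: "real \<Rightarrow> nat \<Rightarrow> complex \<times> complex" where
  "period_col r k =
     (if k = 0 then (1, 0)
      else if k = 1 then (0, 1)
      else if k = 2 then (\<i> * of_real (r ^ 3), of_real r)
      else (of_real r, \<i>))"

definition lattice_gen :: "(nat \<Rightarrow> complex \<times> complex) \<Rightarrow> (complex \<times> complex) set" where
  "lattice_gen v = {(\<Sum>k<4. of_int (n k) *\<^sub>R v k) | n :: nat \<Rightarrow> int. True}"

text \<open>The four generators are R-linearly independent, so they generate a lattice
  of full rank in C^2 = R^4 and C^2/Lambda is a complex torus.\<close>
definition full_lattice_gens :: "(nat \<Rightarrow> complex \<times> complex) \<Rightarrow> bool" where
  "full_lattice_gens v \<longleftrightarrow>
     (\<forall>a :: nat \<Rightarrow> real. (\<Sum>k<4. a k *\<^sub>R v k) = 0 \<longrightarrow> (\<forall>k<4. a k = 0))"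

text \<open>Riemann form (polarization) on C^2 with respect to the lattice Lambda:
  an R-bilinear alternating form E, integer-valued on Lambda, invariant under
  multiplication by i, such that the associated Hermitian form
  H(x,y) = E(ix,y) + i E(x,y) is positive definite.\<close>
definition riemann_form ::
  "(complex \<times> complex) set \<Rightarrow> (complex \<times> complex \<Rightarrow> complex \<times> complex \<Rightarrow> real) \<Rightarrow> bool" where
  "riemann_form \<Lambda> E \<longleftrightarrow>
     bilinear E \<and>
     (\<forall>x. E x x = 0) \<and>
     (\<forall>x\<in>\<Lambda>. \<forall>y\<in>\<Lambda>. E x y \<in> \<int>) \<and>
     (\<forall>x y. E (cscale \<i> x) (cscale \<i> y) = E x y) \<and>
     (\<forall>x. x \<noteq> 0 \<longrightarrow> E (cscale \<i> x) x > 0)"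

definition abelian_variety :: "(nat \<Rightarrow> complex \<times> complex) \<Rightarrow> bool" where
  "abelian_variety v \<longleftrightarrow> full_lattice_gens v \<and> (\<exists>E. riemann_form (lattice_gen v) E)"

definition complex_subspace :: "(complex \<times> complex) set \<Rightarrow> bool" where
  "complex_subspace V \<longleftrightarrow> 0 \<in> V \<and> (\<forall>x\<in>V. \<forall>y\<in>V. x + y \<in> V) \<and> (\<forall>c. \<forall>x\<in>V. cscale c x \<in> V)"

text \<open>Complex subtori of C^2/Lambda correspond to complex subspaces V such that
  V \<inter> Lambda spans V over R (i.e. V \<inter> Lambda is a lattice in V).\<close>
definition simple_torus :: "(nat \<Rightarrow> complex \<times> complex) \<Rightarrow> bool" where
  "simple_torus v \<longleftrightarrow>
     (\<forall>V. complex_subspace V \<and> span (V \<inter> lattice_gen v) = V \<longrightarrow> V = {0} \<or> V = UNIV)"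

end

theory Submission
  imports Defs
begin

text \<open>
  The form \<open>E = Im H\<close> with \<open>H = diag(r\<^sup>-\<^sup>3, 1)\<close> is integral on \<open>\<Lambda>\<close>, so the torus is
  an abelian variety. A proper nonzero complex subtorus would come from a complex line
  \<open>V\<close> spanned over \<open>\<real>\<close> by \<open>V \<inter> \<Lambda>\<close>, hence containing two \<open>\<real>\<close>-independent lattice
  points \<open>l, m\<close> with \<open>det(l, m) = 0\<close>. Writing out this determinant for lattice points
  gives two polynomials in \<open>r\<close> of degree at most 3 with integer coefficients in the
  \<open>2 \<times> 2\<close> minors of the coefficient vectors of \<open>l\<close> and \<open>m\<close>; by the independence of
  \<open>1, r, r\<^sup>2, r\<^sup>3\<close> these coefficients vanish, and together with the Pluecker relation
  this forces all minors to vanish, i.e. \<open>l\<close> and \<open>m\<close> to be \<open>\<real>\<close>-proportional.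
\<close>

definition powers_rat_independent :: "real \<Rightarrow> bool" where
  "powers_rat_independent r \<longleftrightarrow>
     (\<forall>a b c d :: rat. of_rat a + of_rat b * r + of_rat c * r ^ 2 + of_rat d * r ^ 3 = 0
        \<longrightarrow> a = 0 \<and> b = 0 \<and> c = 0 \<and> d = 0)"

lemma powers_rat_independentD_int:
  assumes "powers_rat_independent r"
    and "of_int a + of_int b * r + of_int c * r ^ 2 + of_int d * r ^ 3 = 0"
  shows "a = 0 \<and> b = 0 \<and> c = 0 \<and> d = 0"
proof -
  have "of_rat (of_int a) + of_rat (of_int b) * r + of_rat (of_int c) * r ^ 2
        + of_rat (of_int d) * r ^ 3 = 0"
    using assms(2) by simp
  then show ?thesis
    using assms(1) unfolding powers_rat_independent_def by (metis of_int_eq_0_iff)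
qed

lemma plucker_relation:
  fixes a b :: "nat \<Rightarrow> 'a::comm_ring"
  defines "p \<equiv> \<lambda>i j. a i * b j - a j * b i"
  shows "p 0 2 * p 1 3 = p 0 1 * p 2 3 + p 0 3 * p 1 2"
  unfolding p_def by (simp add: algebra_simps)

lemma minors_vanish_if_plucker_degenerate:
  fixes a b :: "nat \<Rightarrow> 'a::idom"
  assumes "a 0 * b 1 = a 1 * b 0" "a 1 * b 2 = a 2 * b 1"
    "a 0 * b 3 = a 3 * b 0" "a 2 * b 3 = a 3 * b 2"
    and "a 0 * b 2 - a 2 * b 0 = a 1 * b 3 - a 3 * b 1"
  shows "\<forall>j<4. \<forall>k<4. a j * b k = a k * b j"
proof -
  have "(a 0 * b 2 - a 2 * b 0) * (a 0 * b 2 - a 2 * b 0) = 0"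
    using plucker_relation[of a b] assms by simp
  then have "a 0 * b 2 = a 2 * b 0" "a 1 * b 3 = a 3 * b 1"
    using assms(5) by simp_all
  with assms(1-4) show ?thesis
    by (auto simp: numeral_eq_Suc less_Suc_eq mult.commute)
qed

lemma proportional_if_minors_vanish:
  fixes a b :: "'i \<Rightarrow> 'a::field"
  assumes "\<forall>j\<in>I. \<forall>k\<in>I. a j * b k = a k * b j" "i \<in> I" "a i \<noteq> 0"
  shows "\<forall>k\<in>I. b k = b i / a i * a k"
  using assms by (auto simp: field_simps)

definition cdet :: "complex \<times> complex \<Rightarrow> complex \<times> complex \<Rightarrow> complex" where
  "cdet z w = fst z * snd w - snd z * fst w"

lemma complex_subspace_eq_UNIV_if_cdet_nonzero:
  assumes V: "complex_subspace V" and "l \<in> V" "m \<in> V" and D: "cdet l m \<noteq> 0"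
  shows "V = UNIV"
proof -
  have "z \<in> V" for z
  proof -
    have cramer: "cscale (cdet l m) z = cscale (cdet z m) l + cscale (cdet l z) m"
      by (simp add: cdet_def cscale_def prod_eq_iff algebra_simps)
    have "z = cscale (cdet z m / cdet l m) l + cscale (cdet l z / cdet l m) m"
      using arg_cong[OF cramer, of "cscale (inverse (cdet l m))"] D
      by (simp add: cscale_def prod_eq_iff field_simps)
    also have "\<dots> \<in> V"
      using V \<open>l \<in> V\<close> \<open>m \<in> V\<close> by (simp add: complex_subspace_def)
    finally show ?thesis .
  qed
  then show ?thesis by blast
qed

lemma cscale_ii_notin_span_singleton:
  assumes "l \<noteq> 0"
  shows "cscale \<i> l \<notin> span {l}"
proof
  assume "cscale \<i> l \<in> span {l}"
  then obtain t where t: "cscale \<i> l = t *\<^sub>R l" by (auto simp: span_singleton)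
  have "fst l \<noteq> 0 \<or> snd l \<noteq> 0" using assms by (auto simp: prod_eq_iff)
  moreover have "\<i> * fst l = of_real t * fst l" "\<i> * snd l = of_real t * snd l"
    using t by (auto simp: cscale_def prod_eq_iff scaleR_conv_of_real)
  ultimately have "\<i> = of_real t" by auto
  then show False by (simp add: complex_eq_iff)
qed

lemma complex_subspace_trivial_if_no_complex_collinear:
  assumes collinear: "\<And>l m. l \<in> \<Lambda> \<Longrightarrow> m \<in> \<Lambda> \<Longrightarrow> l \<noteq> 0 \<Longrightarrow> cdet l m = 0 \<Longrightarrow> m \<in> span {l}"
    and V: "complex_subspace V" and spanned: "span (V \<inter> \<Lambda>) = V"
  shows "V = {0} \<or> V = UNIV"
proof (rule ccontr)
  assume nontrivial: "\<not> (V = {0} \<or> V = UNIV)"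
  have "V \<inter> \<Lambda> \<noteq> {} \<and> V \<inter> \<Lambda> \<noteq> {0}"
    using spanned nontrivial by auto
  then obtain l where l: "l \<in> V" "l \<in> \<Lambda>" "l \<noteq> 0" by blast
  have "V \<inter> \<Lambda> \<subseteq> span {l}"
  proof
    fix m assume m: "m \<in> V \<inter> \<Lambda>"
    with l nontrivial have "cdet l m = 0"
      using complex_subspace_eq_UNIV_if_cdet_nonzero[OF V] by blast
    with l m show "m \<in> span {l}" using collinear by blast
  qed
  then have "V \<subseteq> span {l}"
    using spanned span_mono by (metis span_span)
  moreover have "cscale \<i> l \<in> V" using V l by (simp add: complex_subspace_def)
  ultimately show False using cscale_ii_notin_span_singleton[OF \<open>l \<noteq> 0\<close>] by blast
qed

definition period_comb :: "real \<Rightarrow> (nat \<Rightarrow> real) \<Rightarrow> complex \<times> complex" where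
  "period_comb r a = (Complex (a 0 + a 3 * r) (a 2 * r ^ 3), Complex (a 1 + a 2 * r) (a 3))"

lemma sum_period_col: "(\<Sum>k<4. a k *\<^sub>R period_col r k) = period_comb r a"
  by (simp add: numeral_eq_Suc period_col_def period_comb_def complex_eq_iff scaleR_conv_of_real)

lemma lattice_gen_period_col:
  "lattice_gen (period_col r) = {period_comb r (of_int \<circ> n) | n. True}"
  by (simp add: lattice_gen_def sum_period_col comp_def)

lemma period_comb_eq_0_iff:
  assumes "r \<noteq> 0"
  shows "period_comb r a = 0 \<longleftrightarrow> (\<forall>k<4. a k = 0)"
  using assms by (auto simp: period_comb_def zero_prod_def complex_eq_iff numeral_eq_Suc less_Suc_eq)

lemma full_lattice_gens_period_col:
  assumes "r \<noteq> 0"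
  shows "full_lattice_gens (period_col r)"
  using period_comb_eq_0_iff[OF assms] by (simp add: full_lattice_gens_def sum_period_col)

definition polarization :: "real \<Rightarrow> complex \<times> complex \<Rightarrow> complex \<times> complex \<Rightarrow> real" where
  "polarization r x y = Im (fst x * cnj (fst y)) / r ^ 3 + Im (snd x * cnj (snd y))"

lemma bilinear_polarization: "bilinear (polarization r)"
  unfolding bilinear_def
  by (auto intro!: linearI simp: polarization_def algebra_simps add_divide_distrib diff_divide_distrib)

lemma polarization_cscale_ii:
  "polarization r (cscale \<i> x) y = Re (fst x * cnj (fst y)) / r ^ 3 + Re (snd x * cnj (snd y))"
  by (simp add: polarization_def cscale_def)

lemma polarization_cscale_ii_cscale_ii:
  "polarization r (cscale \<i> x) (cscale \<i> y) = polarization r x y"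
  by (simp add: polarization_def cscale_def)

lemma polarization_period_comb:
  assumes "r \<noteq> 0"
  shows "polarization r (period_comb r a) (period_comb r b) = a 2 * b 0 - a 0 * b 2 + a 3 * b 1 - a 1 * b 3"
  using assms by (simp add: polarization_def period_comb_def field_simps power3_eq_cube)

lemma polarization_pos:
  assumes "r > 0" "x \<noteq> 0"
  shows "polarization r (cscale \<i> x) x > 0"
proof -
  have "fst x \<noteq> 0 \<or> snd x \<noteq> 0" using assms(2) by (auto simp: prod_eq_iff)
  then have "(cmod (fst x))\<^sup>2 / r ^ 3 + (cmod (snd x))\<^sup>2 > 0"
    using assms(1) by (auto intro: add_pos_nonneg add_nonneg_pos)
  then show ?thesis by (simp add: polarization_cscale_ii complex_mult_cnj complex_mod_mult_cnj cmod_power2)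
qed

lemma riemann_form_polarization:
  assumes "r > 0"
  shows "riemann_form (lattice_gen (period_col r)) (polarization r)"
  unfolding riemann_form_def
proof (intro conjI ballI allI impI)
  fix x y assume "x \<in> lattice_gen (period_col r)" "y \<in> lattice_gen (period_col r)"
  then obtain n k where "x = period_comb r (of_int \<circ> n)" "y = period_comb r (of_int \<circ> k)"
    by (auto simp: lattice_gen_period_col)
  then show "polarization r x y \<in> \<int>"
    using assms by (simp add: polarization_period_comb)
next
  fix x show "polarization r x x = 0" by (simp add: polarization_def)
qed (use assms in \<open>simp_all add: bilinear_polarization polarization_cscale_ii_cscale_ii
                                  polarization_pos\<close>)

lemma period_comb_cong:
  assumes "\<forall>k<4. a k = b k"
  shows "period_comb r a = period_comb r b"
  using assms by (simp add: period_comb_def)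

lemma period_comb_scale: "period_comb r (\<lambda>k. t * a k) = t *\<^sub>R period_comb r a"
  by (simp add: period_comb_def scaleR_prod_def complex_eq_iff algebra_simps)

lemma period_comb_in_span_if_minors_vanish:
  assumes minors: "\<forall>j<4. \<forall>k<4. a j * b k = a k * b j" and nonzero: "period_comb r a \<noteq> 0"
  shows "period_comb r b \<in> span {period_comb r a}"
proof -
  have "\<not> (\<forall>k<4. a k = 0)"
  proof
    assume "\<forall>k<4. a k = 0"
    then have "a 0 = 0" "a 1 = 0" "a 2 = 0" "a 3 = 0" by simp_all
    then show False using nonzero by (simp add: period_comb_def zero_prod_def Complex_eq_0)
  qed
  then obtain i where "i \<in> {..<4}" "a i \<noteq> 0" by auto
  moreover have "\<forall>j\<in>{..<4}. \<forall>k\<in>{..<4}. a j * b k = a k * b j" using minors by simp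
  ultimately have "\<forall>k\<in>{..<4}. b k = b i / a i * a k"
    by (rule proportional_if_minors_vanish[rotated])
  then have "period_comb r b = period_comb r (\<lambda>k. b i / a i * a k)"
    by (intro period_comb_cong) simp
  also have "\<dots> = (b i / a i) *\<^sub>R period_comb r a" by (rule period_comb_scale)
  finally show ?thesis by (simp add: span_base span_scale)
qed

lemma cdet_period_comb:
  "cdet (period_comb r a) (period_comb r b) =
     Complex ((a 0 * b 1 - a 1 * b 0) + (a 0 * b 2 - a 2 * b 0 - a 1 * b 3 + a 3 * b 1) * r
                + (a 3 * b 2 - a 2 * b 3) * r ^ 2 + (a 3 * b 2 - a 2 * b 3) * r ^ 3)
             ((a 0 * b 3 - a 3 * b 0) + (a 2 * b 1 - a 1 * b 2) * r ^ 3)"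
  by (simp add: cdet_def period_comb_def complex_eq_iff)
    (simp add: power2_eq_square power3_eq_cube algebra_simps)

lemma period_lattice_cdet_eq_0_imp_in_span:
  assumes indep: "powers_rat_independent r"
    and "l \<in> lattice_gen (period_col r)" "m \<in> lattice_gen (period_col r)"
    and "l \<noteq> 0" "cdet l m = 0"
  shows "m \<in> span {l}"
proof -
  obtain n k where l: "l = period_comb r (of_int \<circ> n)" and m: "m = period_comb r (of_int \<circ> k)"
    using assms(2,3) by (auto simp: lattice_gen_period_col)
  have "of_int (n 0 * k 1 - n 1 * k 0) + of_int (n 0 * k 2 - n 2 * k 0 - n 1 * k 3 + n 3 * k 1) * r
          + of_int (n 3 * k 2 - n 2 * k 3) * r ^ 2 + of_int (n 3 * k 2 - n 2 * k 3) * r ^ 3 = 0"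
    using arg_cong[OF \<open>cdet l m = 0\<close>, of Re] by (simp add: l m cdet_period_comb)
  from powers_rat_independentD_int[OF indep this]
  have re: "n 0 * k 1 = n 1 * k 0" "n 0 * k 2 - n 2 * k 0 = n 1 * k 3 - n 3 * k 1"
      "n 2 * k 3 = n 3 * k 2"
    by auto
  have "of_int (n 0 * k 3 - n 3 * k 0) + of_int 0 * r + of_int 0 * r ^ 2
          + of_int (n 2 * k 1 - n 1 * k 2) * r ^ 3 = 0"
    using arg_cong[OF \<open>cdet l m = 0\<close>, of Im] by (simp add: l m cdet_period_comb)
  from powers_rat_independentD_int[OF indep this]
  have im: "n 0 * k 3 = n 3 * k 0" "n 1 * k 2 = n 2 * k 1"
    by auto
  from minors_vanish_if_plucker_degenerate[OF re(1) im(2) im(1) re(3) re(2)]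
  have "\<forall>i<4. \<forall>j<4. (of_int \<circ> n) i * (of_int \<circ> k) j = (of_int \<circ> n) j * (of_int \<circ> k) i"
    by (metis comp_apply of_int_mult)
  then show ?thesis
    using period_comb_in_span_if_minors_vanish \<open>l \<noteq> 0\<close> l m by blast
qed

lemma simple_torus_period_col:
  assumes "powers_rat_independent r"
  shows "simple_torus (period_col r)"
  unfolding simple_torus_def
  using complex_subspace_trivial_if_no_complex_collinear
    period_lattice_cdet_eq_0_imp_in_span[OF assms] by blast

theorem lemma2:
  fixes r :: real
  assumes "r > 0"
    and "\<forall>a b c d :: rat.
           of_rat a + of_rat b * r + of_rat c * r ^ 2 + of_rat d * r ^ 3 = 0
           \<longrightarrow> a = 0 \<and> b = 0 \<and> c = 0 \<and> d = 0"
  shows "abelian_variety (period_col r) \<and> simple_torus (period_col r)"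
proof -
  have "powers_rat_independent r" using assms(2) by (simp add: powers_rat_independent_def)
  then show ?thesis
    using assms(1) full_lattice_gens_period_col riemann_form_polarization simple_torus_period_col
    unfolding abelian_variety_def by auto
qed

end
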